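(* Let $T_\sigma$ be a binary separating tree of a separable permutation $\sigma$ of size $k$ and $\tau$ a permutation of size $n$. The dynamic programming algorithm that computes, for all nodes $V$ of $T_\sigma$ (in postfix order) and all $1\le i\le j\le n$, $1\le a\le b\le n$, the entries $M(V,i,j,a,b)$ defined below, storing each entry as an explicit pattern and evaluating each $\mathrm{Longest}$ by exhaustive search over the indicated pairs $(h,c)$, and outputs $M(\text{root},1,n,1,n)$, runs in time $\mathcal{O}(\min(k,n)\,k\,n^6)$. The entries are: $M(V,i,j,a,b)=\epsilon$ if $i>j$ or $a>b$; for a leaf $V$, $M(V,i,j,a,b)=1$ if some $h\in\{i,\dots,j\}$ has $a\le\tau_h\le b$ and $\epsilon$ otherwise; for an internal node with children $V_L,V_R$, $M(V,i,j,a,b)=\mathrm{Longest}\{M(V_L,i,h-1,a,c-1)\oplus M(V_R,h,j,c,b)\}$ if $V$ is labeled $+$ and $\mathrm{Longest}\{M(V_L,i,h-1,c,b)\ominus M(V_R,h,j,a,c-1)\}$ if labeled $-$, both over $i\le h\le j+1$, $a\le c\le b+1$.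
   Context: A permutation is separable if it avoids the patterns $3\,1\,4\,2$ and $2\,4\,1\,3$ ($\pi$ is a pattern of $\sigma$ if some subsequence of $\sigma$ is order-isomorphic to $\pi$). A binary separating tree of $\sigma=\sigma_1\cdots\sigma_k$ is an ordered binary tree with $k$ leaves (read left to right as $\sigma_1,\dots,\sigma_k$), internal nodes labeled $+$ or $-$, such that the entries below each node have values forming an interval and, at a $+$ (resp. $-$) node, values below the left child are all smaller (resp. larger) than those below the right child; it has $\mathcal{O}(k)$ nodes. $\epsilon$ is the empty pattern. For patterns $\pi$ of length $k$ and $\pi'$ of length $k'$: $\pi\oplus\pi'=\pi_1\cdots\pi_k(\pi'_1+k)\cdots(\pi'_{k'}+k)$ and $\pi\ominus\pi'=(\pi_1+k')\cdots(\pi_k+k')\pi'_1\cdots\pi'_{k'}$. $\mathrm{Longest}(S)$ returns an element of maximal length of the set $S$ of patterns. *)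

theory Defs
  imports Main
begin

text \<open>A permutation of size k is a list containing each of 1..k exactly once
  (one-line notation; entry i of the paper is xs ! (i-1)).\<close>
definition is_perm :: "nat list \<Rightarrow> bool" where
  "is_perm xs \<longleftrightarrow> distinct xs \<and> set xs = {1..length xs}"

definition contains_pattern :: "nat list \<Rightarrow> nat list \<Rightarrow> bool" where
  "contains_pattern sigma pi \<longleftrightarrow>
     (\<exists>ys \<in> set (subseqs sigma). length ys = length pi \<and>
        (\<forall>i < length pi. \<forall>j < length pi. ys ! i < ys ! j \<longleftrightarrow> pi ! i < pi ! j))"

definition separable :: "nat list \<Rightarrow> bool" where
  "separable sigma \<longleftrightarrow> \<not> contains_pattern sigma [3,1,4,2] \<and> \<not> contains_pattern sigma [2,4,1,3]"

datatype sign = Plus | Minus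

datatype stree = Leaf | Node sign stree stree

fun leaves :: "stree \<Rightarrow> nat" where
  "leaves Leaf = 1"
| "leaves (Node s L R) = leaves L + leaves R"

definition is_interval :: "nat set \<Rightarrow> bool" where
  "is_interval A \<longleftrightarrow> (\<exists>lo hi. A = {lo..hi})"

fun is_sep_tree :: "stree \<Rightarrow> nat list \<Rightarrow> bool" where
  "is_sep_tree Leaf xs = (length xs = 1)"
| "is_sep_tree (Node s L R) xs =
     (let ys = take (leaves L) xs; zs = drop (leaves L) xs in
        length xs = leaves L + leaves R \<and> is_interval (set xs) \<and>
        (case s of
           Plus \<Rightarrow> (\<forall>y\<in>set ys. \<forall>z\<in>set zs. y < z)
         | Minus \<Rightarrow> (\<forall>y\<in>set ys. \<forall>z\<in>set zs. y > z)) \<and>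
        is_sep_tree L ys \<and> is_sep_tree R zs)"

fun postorder :: "stree \<Rightarrow> stree list" where
  "postorder Leaf = [Leaf]"
| "postorder (Node s L R) = postorder L @ postorder R @ [Node s L R]"

definition oplus :: "nat list \<Rightarrow> nat list \<Rightarrow> nat list" where
  "oplus p q = p @ map (\<lambda>x. x + length p) q"

definition ominus :: "nat list \<Rightarrow> nat list \<Rightarrow> nat list" where
  "ominus p q = map (\<lambda>x. x + length q) p @ q"

definition longest :: "nat list list \<Rightarrow> nat list" where
  "longest xs = foldl (\<lambda>best x. if length best < length x then x else best) [] xs"

fun M :: "stree \<Rightarrow> nat list \<Rightarrow> nat \<Rightarrow> nat \<Rightarrow> nat \<Rightarrow> nat \<Rightarrow> nat list" where
  "M Leaf tau i j a b =
     (if j < i \<or> b < a then []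
      else if (\<exists>h\<in>{i..j}. a \<le> tau ! (h - 1) \<and> tau ! (h - 1) \<le> b) then [1] else [])"
| "M (Node Plus L R) tau i j a b =
     (if j < i \<or> b < a then []
      else longest [oplus (M L tau i (h - 1) a (c - 1)) (M R tau h j c b).
                      h \<leftarrow> [i..<j + 2], c \<leftarrow> [a..<b + 2]])"
| "M (Node Minus L R) tau i j a b =
     (if j < i \<or> b < a then []
      else longest [ominus (M L tau i (h - 1) c b) (M R tau h j a (c - 1)).
                      h \<leftarrow> [i..<j + 2], c \<leftarrow> [a..<b + 2]])"

text \<open>Cost of computing one entry M(V,i,j,a,b), the children's entries being already stored:
  an epsilon entry costs 1; a leaf entry scans h = i..j; an internal entry considers every
  pair (h,c), looks up the two stored child patterns, builds the explicit pattern
  (cost proportional to its length) and compares lengths: 1 + |left| + |right| per pair.\<close>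
fun entry_cost :: "stree \<Rightarrow> nat list \<Rightarrow> nat \<Rightarrow> nat \<Rightarrow> nat \<Rightarrow> nat \<Rightarrow> nat" where
  "entry_cost Leaf tau i j a b = (if j < i \<or> b < a then 1 else j - i + 2)"
| "entry_cost (Node Plus L R) tau i j a b =
     (if j < i \<or> b < a then 1
      else sum_list [1 + length (M L tau i (h - 1) a (c - 1)) + length (M R tau h j c b).
                      h \<leftarrow> [i..<j + 2], c \<leftarrow> [a..<b + 2]])"
| "entry_cost (Node Minus L R) tau i j a b =
     (if j < i \<or> b < a then 1
      else sum_list [1 + length (M L tau i (h - 1) c b) + length (M R tau h j a (c - 1)).
                      h \<leftarrow> [i..<j + 2], c \<leftarrow> [a..<b + 2]])"

definition node_cost :: "stree \<Rightarrow> nat list \<Rightarrow> nat" where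
  "node_cost V tau = (let n = length tau in
     sum_list [entry_cost V tau i j a b. i \<leftarrow> [1..<n + 1], j \<leftarrow> [i..<n + 1],
                                         a \<leftarrow> [1..<n + 1], b \<leftarrow> [a..<n + 1]])"

definition dp_cost :: "stree \<Rightarrow> nat list \<Rightarrow> nat" where
  "dp_cost T tau = sum_list (map (\<lambda>V. node_cost V tau) (postorder T))
                   + length (M T tau 1 (length tau) 1 (length tau))"

end

theory Submission
  imports Defs
begin

text \<open>Every stored pattern is short: an entry M(V,i,j,a,b) is a pattern of the leaves of V
  embedded into positions i..j of tau, so its length is at most min(k, n). Hence an internal
  entry costs O(n^2 min(k,n)) (n^2 pairs (h,c), each building a pattern of length at most
  2 min(k,n)), a node costs O(n^6 min(k,n)) over its n^4 index tuples, and the 2k - 1 nodes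
  of the tree cost O(min(k,n) k n^6) in total.\<close>

lemma length_oplus [simp]: "length (oplus p q) = length p + length q"
  by (simp add: oplus_def)

lemma length_ominus [simp]: "length (ominus p q) = length p + length q"
  by (simp add: ominus_def)

lemma length_longest_le:
  assumes "\<And>x. x \<in> set xs \<Longrightarrow> length x \<le> B"
  shows "length (longest xs) \<le> B"
proof -
  have "length (foldl (\<lambda>best x. if length best < length x then x else best) best xs) \<le> B"
    if "length best \<le> B" for best
    using assms that by (induction xs arbitrary: best) auto
  then show ?thesis
    unfolding longest_def by simp
qed

lemma length_M_le:
  assumes "1 \<le> i"
  shows "length (M V tau i j a b) \<le> min (leaves V) (Suc j - i)"
  using assms
proof (induction V arbitrary: i j a b)
  case Leaf
  then show ?case by auto
next
  case (Node s L R)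
  have split_bound:
    "length (M L tau i (h - 1) x y) + length (M R tau h j x' y') \<le> leaves L + leaves R"
    "length (M L tau i (h - 1) x y) + length (M R tau h j x' y') \<le> Suc j - i"
    if "i \<le> h" "h < j + 2" for h x y x' y'
    using Node.IH(1)[of i "h - 1" x y] Node.IH(2)[of h j x' y'] Node.prems that by auto
  show ?case
    by (cases s) (auto simp del: upt_Suc intro!: length_longest_le split_bound[simplified])
qed

corollary length_M_le_min:
  "1 \<le> i \<Longrightarrow> j \<le> n \<Longrightarrow> leaves V \<le> k \<Longrightarrow> length (M V tau i j a b) \<le> min k n"
  using length_M_le[of i V tau j a b] by auto

lemma sum_list_map_le:
  fixes f :: "'a \<Rightarrow> nat"
  assumes "\<And>x. x \<in> set xs \<Longrightarrow> f x \<le> B" and "length xs \<le> p"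
  shows "sum_list (map f xs) \<le> p * B"
proof -
  have "sum_list (map f xs) \<le> sum_list (map (\<lambda>_. B) xs)"
    using assms(1) by (rule sum_list_mono)
  also have "\<dots> = length xs * B"
    by (simp add: sum_list_triv)
  also have "\<dots> \<le> p * B"
    using assms(2) by simp
  finally show ?thesis .
qed

lemma sum_list_concat_map_le:
  fixes g :: "'a \<Rightarrow> nat list"
  assumes "\<And>x. x \<in> set xs \<Longrightarrow> sum_list (g x) \<le> B" and "length xs \<le> p"
  shows "sum_list (concat (map g xs)) \<le> p * B"
proof -
  have "sum_list (concat (map g xs)) = sum_list (map (\<lambda>x. sum_list (g x)) xs)"
    by (induction xs) auto
  also have "\<dots> \<le> p * B"
    using assms by (rule sum_list_map_le)
  finally show ?thesis .
qed

lemma entry_cost_le: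
  assumes "1 \<le> i" "j \<le> n" "b \<le> n" "leaves V \<le> k"
  shows "entry_cost V tau i j a b \<le> (n + 2) * ((n + 2) * (1 + 2 * min k n))"
proof (cases V)
  case Leaf
  then show ?thesis
    using assms by (auto simp: algebra_simps)
next
  case (Node s L R)
  show ?thesis
  proof (cases "j < i \<or> b < a")
    case True
    then show ?thesis
      using Node by (cases s) auto
  next
    case False
    have "leaves L \<le> k" "leaves R \<le> k"
      using assms(4) Node by auto
    have pair_cost:
      "1 + length (M L tau i (h - 1) x y) + length (M R tau h j x' y') \<le> 1 + 2 * min k n"
      if "i \<le> h" "h < j + 2" for h x y x' y'
    proof -
      have "length (M L tau i (h - 1) x y) \<le> min k n"
        using that assms \<open>leaves L \<le> k\<close> by (intro length_M_le_min) auto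
      moreover have "length (M R tau h j x' y') \<le> min k n"
        using that assms \<open>leaves R \<le> k\<close> by (intro length_M_le_min) auto
      ultimately show ?thesis
        by linarith
    qed
    show ?thesis
      unfolding Node using assms
      by (cases s; simp only: entry_cost.simps False if_False;
          intro sum_list_concat_map_le sum_list_map_le pair_cost; auto)
  qed
qed

lemma length_sep_tree: "is_sep_tree T xs \<Longrightarrow> length xs = leaves T"
  by (induction T arbitrary: xs) (auto simp: Let_def)

lemma leaves_pos: "0 < leaves T"
  by (induction T) auto

lemma length_postorder: "Suc (length (postorder T)) = 2 * leaves T"
  by (induction T) auto

lemma leaves_le_if_in_postorder: "V \<in> set (postorder T) \<Longrightarrow> leaves V \<le> leaves T"
  by (induction T) auto

lemma node_cost_le:
  assumes "1 \<le> length tau" "leaves V \<le> k"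
  shows "node_cost V tau \<le> 27 * min k (length tau) * length tau ^ 6"
proof -
  define n m where "n = length tau" and "m = min k n"
  have "1 \<le> m"
    using assms leaves_pos[of V] unfolding m_def n_def by simp
  have entry: "entry_cost V tau i j a b \<le> 27 * m * n\<^sup>2" if "1 \<le> i" "j \<le> n" "b \<le> n" for i j a b
  proof -
    have "entry_cost V tau i j a b \<le> (n + 2) * ((n + 2) * (1 + 2 * m))"
      using entry_cost_le that assms(2) unfolding m_def by blast
    also have "\<dots> \<le> (3 * n) * ((3 * n) * (3 * m))"
      using assms(1) \<open>1 \<le> m\<close> unfolding n_def by (intro mult_mono) auto
    also have "\<dots> = 27 * m * n\<^sup>2"
      by (simp add: power2_eq_square algebra_simps)
    finally show ?thesis .
  qed
  have "node_cost V tau \<le> n * (n * (n * (n * (27 * m * n\<^sup>2))))"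
    unfolding node_cost_def Let_def n_def[symmetric]
    by (intro sum_list_concat_map_le sum_list_map_le entry) auto
  also have "\<dots> = 27 * m * n ^ 6"
    by (simp add: power_def algebra_simps numeral_eq_Suc)
  finally show ?thesis
    unfolding m_def n_def .
qed

lemma dp_cost_le:
  assumes "1 \<le> length tau"
  shows "dp_cost T tau \<le> 55 * min (leaves T) (length tau) * leaves T * length tau ^ 6"
proof -
  define n k where "n = length tau" and "k = leaves T"
  define m where "m = min k n"
  have "1 \<le> n" "1 \<le> k"
    using assms leaves_pos[of T] unfolding n_def k_def by simp_all
  have "sum_list (map (\<lambda>V. node_cost V tau) (postorder T)) \<le> (2 * k) * (27 * m * n ^ 6)"
    using length_postorder[of T] node_cost_le[OF assms leaves_le_if_in_postorder]
    unfolding m_def n_def k_def by (intro sum_list_map_le) auto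
  moreover have "length (M T tau 1 n 1 n) \<le> m * k * n ^ 6"
  proof -
    have "length (M T tau 1 n 1 n) \<le> m"
      using length_M_le_min[of 1 n n T k] unfolding m_def k_def by simp
    also have "\<dots> \<le> m * k * n ^ 6"
      using \<open>1 \<le> n\<close> \<open>1 \<le> k\<close> by simp
    finally show ?thesis .
  qed
  ultimately have "dp_cost T tau \<le> 55 * m * k * n ^ 6"
    unfolding dp_cost_def n_def by (simp add: algebra_simps)
  then show ?thesis
    unfolding m_def n_def k_def .
qed

theorem proposition4:
  shows "\<exists>C::nat. \<forall>sigma T tau.
           is_perm sigma \<and> separable sigma \<and> is_sep_tree T sigma \<and>
           is_perm tau \<and> 1 \<le> length tau \<longrightarrow>
           dp_cost T tau \<le> C * min (length sigma) (length tau) * length sigma * length tau ^ 6"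
  using dp_cost_le length_sep_tree by metis

end
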